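(* Let $\mathcal{P}^d=(\mathcal{D},\varphi,\mathcal{E})$ be a trembling-hand problem for $\mathrm{LTL}_f$ planning in a deterministic domain $\mathcal{D}=(S,s_0,A,F_d,L)$, let $\mathcal{M}$ be the MDP constructed from it, let $\mathcal{M}^\times=\mathcal{M}\times Aut_\varphi$ be the product MDP with goal set $G$ (see context). If $\sigma_m^*$ is an optimal strategy of $\mathcal{M}^\times$ for reaching $G$ (i.e., it maximizes the probability of eventually visiting $G$), then the strategy $\sigma_p^*$ on $\mathcal{D}$ defined by $\sigma_p^*(\rho)=\sigma_m^*(\rho^\times)$ for every finite path $\rho$ of $\mathcal{D}$ is an optimal strategy for $\mathcal{P}^d$.
   Context: $\mathrm{LTL}_f$ is linear temporal logic on finite nonempty traces over propositions $Prop$. For $\varphi$ let $Aut_\varphi=(2^{Prop},Q,q_0,\delta,acc)$ be a DFA accepting exactly the finite traces satisfying $\varphi$. A deterministic domain $\mathcal{D}=(S,s_0,A,F_d,L)$: finite states $S$, initial $s_0$, finite actions $A$, applicable actions $A(s)\subseteq A$ (nonempty), successor $F_d(s,a)$ for $a\in A(s)$, labelling $L:S\to2^{Prop}$. Finite paths are alternating sequences $s_0a_0s_1\cdots s_k$ with $a_i\in A(s_i)$; an agent strategy maps finite paths to actions applicable at the last state. Errors $\mathcal{E}=\{err(s,a)\}$: for $s\in S,a\in A(s)$, $err(s,a)$ is a distribution over $A(s)$ (probability of actually instructing $a'$ when intending $a$). Given strategy $\sigma_p$, perturbed paths are sequences $(s_0,a_0,a_0')(s_1,a_1,a_1')\cdots$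 with $a_i=\sigma_p(s_0a_0\cdots a_{i-1}s_i)$, $a_i'$ drawn from $err(s_i,a_i)$, $s_{i+1}=F_d(s_i,a_i')$. $\Pr_{\mathcal{D}}^{\sigma_p,\mathcal{E}}(\varphi)$ is the probability that some $k\ge0$ has $L(s_0)\cdots L(s_k)\models\varphi$; a strategy maximizing it is optimal for $\mathcal{P}^d$. Constructed MDP $\mathcal{M}=(S,s_0,A,\mathcal{T},L)$: same states, actions, applicability and labels as $\mathcal{D}$, with $\mathcal{T}(s,a,s')=\sum_{a'\in A(s):F_d(s,a')=s'}err(s,a)(a')$. Product MDP $\mathcal{M}^\times$: states $S\times Q$, initial state $(s_0,\delta(q_0,L(s_0)))$, actions applicable at $(s,q)$ are $A(s)$, and $\mathcal{T}^\times((s,q),a,(s',q'))=\mathcal{T}(s,a,s')$ if $q'=\delta(q,L(s'))$ and $0$ otherwise. Goal set $G=\{(s,q): q\in acc\}$. Strategies of $\mathcal{M}^\times$ are functions from its finite paths to applicable actions. For a finite path $\rho=s_0a_0s_1\cdots s_k$ of $\mathcal{D}$, $\rho^\times=(s_0,q_0')a_0(s_1,q_1')\cdots(s_k,q_k')$ where $q_0'=\delta(q_0,L(s_0))$ and $q_{i+1}'=\delta(q_i',L(s_{i+1}))$. *)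

theory Defs
  imports "HOL-Probability.Probability"
begin

datatype 'p ltlf =
    TT
  | Atom 'p
  | Neg "'p ltlf"
  | Conj "'p ltlf" "'p ltlf"
  | Nxt "'p ltlf"
  | Until "'p ltlf" "'p ltlf"

fun ltlf_sat_at :: "'p set list \<Rightarrow> nat \<Rightarrow> 'p ltlf \<Rightarrow> bool" where
  "ltlf_sat_at w i TT = True"
| "ltlf_sat_at w i (Atom p) = (p \<in> w ! i)"
| "ltlf_sat_at w i (Neg f) = (\<not> ltlf_sat_at w i f)"
| "ltlf_sat_at w i (Conj f g) = (ltlf_sat_at w i f \<and> ltlf_sat_at w i g)"
| "ltlf_sat_at w i (Nxt f) = (Suc i < length w \<and> ltlf_sat_at w (Suc i) f)"
| "ltlf_sat_at w i (Until f g) =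
     (\<exists>j. i \<le> j \<and> j < length w \<and> ltlf_sat_at w j g \<and>
          (\<forall>k. i \<le> k \<and> k < j \<longrightarrow> ltlf_sat_at w k f))"

definition ltlf_models :: "'p set list \<Rightarrow> 'p ltlf \<Rightarrow> bool" where
  "ltlf_models w \<phi> = (w \<noteq> [] \<and> ltlf_sat_at w 0 \<phi>)"

definition dfa_run :: "('q \<Rightarrow> 'p set \<Rightarrow> 'q) \<Rightarrow> 'q \<Rightarrow> 'p set list \<Rightarrow> 'q" where
  "dfa_run \<delta> q0 w = foldl \<delta> q0 w"

definition is_dfa_for :: "'p set \<Rightarrow> 'q set \<Rightarrow> 'q \<Rightarrow> ('q \<Rightarrow> 'p set \<Rightarrow> 'q) \<Rightarrow> 'q set
    \<Rightarrow> 'p ltlf \<Rightarrow> bool" where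
  "is_dfa_for Prop Q q0 \<delta> acc \<phi> \<longleftrightarrow>
     finite Q \<and> q0 \<in> Q \<and> acc \<subseteq> Q \<and>
     (\<forall>q\<in>Q. \<forall>x\<in>Pow Prop. \<delta> q x \<in> Q) \<and>
     (\<forall>w\<in>lists (Pow Prop). w \<noteq> [] \<longrightarrow> (dfa_run \<delta> q0 w \<in> acc \<longleftrightarrow> ltlf_models w \<phi>))"

definition is_domain :: "'p set \<Rightarrow> 's set \<Rightarrow> 's \<Rightarrow> ('s \<Rightarrow> 'a set) \<Rightarrow> ('s \<Rightarrow> 'a \<Rightarrow> 's)
    \<Rightarrow> ('s \<Rightarrow> 'p set) \<Rightarrow> bool" where
  "is_domain Prop S s0 A F L \<longleftrightarrow>
     finite Prop \<and> finite S \<and> s0 \<in> S \<and>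
     (\<forall>s\<in>S. A s \<noteq> {} \<and> finite (A s) \<and> (\<forall>a\<in>A s. F s a \<in> S) \<and> L s \<subseteq> Prop)"

definition is_errors :: "'s set \<Rightarrow> ('s \<Rightarrow> 'a set) \<Rightarrow> ('s \<Rightarrow> 'a \<Rightarrow> 'a pmf) \<Rightarrow> bool" where
  "is_errors S A err \<longleftrightarrow> (\<forall>s\<in>S. \<forall>a\<in>A s. set_pmf (err s a) \<subseteq> A s)"

text \<open>A finite path x0 a0 x1 ... a(k-1) xk is represented by the history
  [(x0,a0),...,(x(k-1),a(k-1))] together with the last state xk.
  A strategy maps (history, last state) to an action.\<close>

definition is_fpath :: "'x set \<Rightarrow> ('x \<Rightarrow> 'a set) \<Rightarrow> 'x \<Rightarrow> ('x \<times> 'a) list \<Rightarrow> 'x \<Rightarrow> bool" where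
  "is_fpath St Act x0 h x \<longleftrightarrow>
     (\<forall>(y,a)\<in>set h. y \<in> St \<and> a \<in> Act y) \<and> x \<in> St \<and>
     hd (map fst h @ [x]) = x0"

definition valid_strategy :: "'x set \<Rightarrow> ('x \<Rightarrow> 'a set) \<Rightarrow> 'x \<Rightarrow> (('x \<times> 'a) list \<Rightarrow> 'x \<Rightarrow> 'a)
    \<Rightarrow> bool" where
  "valid_strategy St Act x0 \<sigma> \<longleftrightarrow> (\<forall>h x. is_fpath St Act x0 h x \<longrightarrow> \<sigma> h x \<in> Act x)"

text \<open>Probability that, along the perturbed path continuing the history (h, s),
  some prefix of length at most n more steps satisfies phi, given that no earlier
  prefix did (first-hitting recursion). Intended actions are recorded in the history.\<close>
fun th_within :: "('s \<Rightarrow> 'a set) \<Rightarrow> ('s \<Rightarrow> 'a \<Rightarrow> 's) \<Rightarrow> ('s \<Rightarrow> 'p set) \<Rightarrow>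
    ('s \<Rightarrow> 'a \<Rightarrow> 'a pmf) \<Rightarrow> 'p ltlf \<Rightarrow> (('s \<times> 'a) list \<Rightarrow> 's \<Rightarrow> 'a) \<Rightarrow>
    nat \<Rightarrow> ('s \<times> 'a) list \<Rightarrow> 's \<Rightarrow> real" where
  "th_within A F L err \<phi> \<sigma> 0 h s =
     (if ltlf_models (map L (map fst h @ [s])) \<phi> then 1 else 0)"
| "th_within A F L err \<phi> \<sigma> (Suc n) h s =
     (if ltlf_models (map L (map fst h @ [s])) \<phi> then 1
      else (\<Sum>a'\<in>A s. pmf (err s (\<sigma> h s)) a' *
                 th_within A F L err \<phi> \<sigma> n (h @ [(s, \<sigma> h s)]) (F s a')))"

text \<open>Pr(phi) = probability that some k has L(s0)...L(sk) |= phi, i.e. the limit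
  (supremum) of the probabilities of the increasing events "some k <= n".\<close>
definition th_prob :: "'s \<Rightarrow> ('s \<Rightarrow> 'a set) \<Rightarrow> ('s \<Rightarrow> 'a \<Rightarrow> 's) \<Rightarrow> ('s \<Rightarrow> 'p set) \<Rightarrow>
    ('s \<Rightarrow> 'a \<Rightarrow> 'a pmf) \<Rightarrow> 'p ltlf \<Rightarrow> (('s \<times> 'a) list \<Rightarrow> 's \<Rightarrow> 'a) \<Rightarrow> real" where
  "th_prob s0 A F L err \<phi> \<sigma> = (SUP n. th_within A F L err \<phi> \<sigma> n [] s0)"

definition th_optimal :: "'s set \<Rightarrow> 's \<Rightarrow> ('s \<Rightarrow> 'a set) \<Rightarrow> ('s \<Rightarrow> 'a \<Rightarrow> 's) \<Rightarrow> ('s \<Rightarrow> 'p set) \<Rightarrow>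
    ('s \<Rightarrow> 'a \<Rightarrow> 'a pmf) \<Rightarrow> 'p ltlf \<Rightarrow> (('s \<times> 'a) list \<Rightarrow> 's \<Rightarrow> 'a) \<Rightarrow> bool" where
  "th_optimal S s0 A F L err \<phi> \<sigma> \<longleftrightarrow>
     valid_strategy S A s0 \<sigma> \<and>
     (\<forall>\<sigma>'. valid_strategy S A s0 \<sigma>' \<longrightarrow>
        th_prob s0 A F L err \<phi> \<sigma>' \<le> th_prob s0 A F L err \<phi> \<sigma>)"

fun reach_within :: "'x set \<Rightarrow> ('x \<Rightarrow> 'a \<Rightarrow> 'x \<Rightarrow> real) \<Rightarrow> 'x set \<Rightarrow>
    (('x \<times> 'a) list \<Rightarrow> 'x \<Rightarrow> 'a) \<Rightarrow> nat \<Rightarrow> ('x \<times> 'a) list \<Rightarrow> 'x \<Rightarrow> real" where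
  "reach_within St T G \<sigma> 0 h x = (if x \<in> G then 1 else 0)"
| "reach_within St T G \<sigma> (Suc n) h x =
     (if x \<in> G then 1
      else (\<Sum>x'\<in>St. T x (\<sigma> h x) x' * reach_within St T G \<sigma> n (h @ [(x, \<sigma> h x)]) x'))"

definition reach_prob :: "'x set \<Rightarrow> ('x \<Rightarrow> 'a \<Rightarrow> 'x \<Rightarrow> real) \<Rightarrow> 'x \<Rightarrow> 'x set \<Rightarrow>
    (('x \<times> 'a) list \<Rightarrow> 'x \<Rightarrow> 'a) \<Rightarrow> real" where
  "reach_prob St T x0 G \<sigma> = (SUP n. reach_within St T G \<sigma> n [] x0)"

definition reach_optimal :: "'x set \<Rightarrow> ('x \<Rightarrow> 'a set) \<Rightarrow> ('x \<Rightarrow> 'a \<Rightarrow> 'x \<Rightarrow> real) \<Rightarrow> 'x \<Rightarrow>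
    'x set \<Rightarrow> (('x \<times> 'a) list \<Rightarrow> 'x \<Rightarrow> 'a) \<Rightarrow> bool" where
  "reach_optimal St Act T x0 G \<sigma> \<longleftrightarrow>
     valid_strategy St Act x0 \<sigma> \<and>
     (\<forall>\<sigma>'. valid_strategy St Act x0 \<sigma>' \<longrightarrow> reach_prob St T x0 G \<sigma>' \<le> reach_prob St T x0 G \<sigma>)"

definition mdp_T :: "('s \<Rightarrow> 'a set) \<Rightarrow> ('s \<Rightarrow> 'a \<Rightarrow> 's) \<Rightarrow> ('s \<Rightarrow> 'a \<Rightarrow> 'a pmf) \<Rightarrow>
    's \<Rightarrow> 'a \<Rightarrow> 's \<Rightarrow> real" where
  "mdp_T A F err s a s' = (\<Sum>a'\<in>{a'\<in>A s. F s a' = s'}. pmf (err s a) a')"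

definition prod_T :: "('s \<Rightarrow> 'a \<Rightarrow> 's \<Rightarrow> real) \<Rightarrow> ('q \<Rightarrow> 'p set \<Rightarrow> 'q) \<Rightarrow> ('s \<Rightarrow> 'p set) \<Rightarrow>
    ('s \<times> 'q) \<Rightarrow> 'a \<Rightarrow> ('s \<times> 'q) \<Rightarrow> real" where
  "prod_T T \<delta> L x a x' =
     (if snd x' = \<delta> (snd x) (L (fst x')) then T (fst x) a (fst x') else 0)"

definition prod_goal :: "'s set \<Rightarrow> 'q set \<Rightarrow> 'q set \<Rightarrow> ('s \<times> 'q) set" where
  "prod_goal S Q acc = {(s, q). s \<in> S \<and> q \<in> Q \<and> q \<in> acc}"

definition prod_path :: "('q \<Rightarrow> 'p set \<Rightarrow> 'q) \<Rightarrow> 'q \<Rightarrow> ('s \<Rightarrow> 'p set) \<Rightarrow>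
    ('s \<times> 'a) list \<Rightarrow> 's \<Rightarrow> (('s \<times> 'q) \<times> 'a) list \<times> ('s \<times> 'q)" where
  "prod_path \<delta> q0 L h s =
     (let ss = map fst h @ [s];
          qs = (\<lambda>i. dfa_run \<delta> q0 (map L (take (Suc i) ss)))
      in (map (\<lambda>i. ((fst (h ! i), qs i), snd (h ! i))) [0..<length h],
          (s, qs (length h))))"

definition induced_strategy :: "('q \<Rightarrow> 'p set \<Rightarrow> 'q) \<Rightarrow> 'q \<Rightarrow> ('s \<Rightarrow> 'p set) \<Rightarrow>
    ((('s \<times> 'q) \<times> 'a) list \<Rightarrow> ('s \<times> 'q) \<Rightarrow> 'a) \<Rightarrow> ('s \<times> 'a) list \<Rightarrow> 's \<Rightarrow> 'a" where
  "induced_strategy \<delta> q0 L \<sigma>m h s = case_prod \<sigma>m (prod_path \<delta> q0 L h s)"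

end

theory Submission
  imports Defs
begin

text \<open>Along the lifted path \<open>\<rho>\<^sup>\<times>\<close> the automaton component is the DFA state reached on the
  labels read so far, so the product reaches the goal set exactly when the trace read so far
  satisfies \<open>\<phi>\<close>; and one product step under action \<open>a\<close> is one trembling-hand step in which
  the perturbed action \<open>a'\<close> is drawn from \<open>err s a\<close>. Hence the bounded-horizon recursions
  for the two probabilities agree for every product strategy \<open>\<tau>\<close> and its induced domain
  strategy, and so do their suprema. Every domain strategy is induced by the product strategy
  that ignores the automaton component, so an optimal product strategy induces an optimal
  domain strategy.\<close>

lemma dfa_run_snoc: "dfa_run \<delta> q0 (w @ [x]) = \<delta> (dfa_run \<delta> q0 w) x"
  by (simp add: dfa_run_def)

lemma dfa_run_in_states:
  assumes aut: "is_dfa_for Prop Q q0 \<delta> acc \<phi>" and w: "set w \<subseteq> Pow Prop"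
  shows "dfa_run \<delta> q0 w \<in> Q"
proof -
  have "\<forall>q\<in>Q. foldl \<delta> q w \<in> Q"
    using w aut by (induction w) (auto simp: is_dfa_for_def)
  then show ?thesis
    using aut by (simp add: dfa_run_def is_dfa_for_def)
qed

lemma labels_in_Pow:
  assumes "is_domain Prop S s0 A F L" and "set ss \<subseteq> S"
  shows "set (map L ss) \<subseteq> Pow Prop"
  using assms by (auto simp: is_domain_def)

lemma dfa_run_labels_in_states:
  assumes "is_domain Prop S s0 A F L" and "is_dfa_for Prop Q q0 \<delta> acc \<phi>" and "set ss \<subseteq> S"
  shows "dfa_run \<delta> q0 (map L ss) \<in> Q"
  by (rule dfa_run_in_states[OF assms(2) labels_in_Pow[OF assms(1,3)]])

lemma dfa_run_labels_accepted_iff: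
  assumes "is_domain Prop S s0 A F L" and "is_dfa_for Prop Q q0 \<delta> acc \<phi>"
    and "set ss \<subseteq> S" and "ss \<noteq> []"
  shows "dfa_run \<delta> q0 (map L ss) \<in> acc \<longleftrightarrow> ltlf_models (map L ss) \<phi>"
proof -
  have "map L ss \<in> lists (Pow Prop)"
    using labels_in_Pow[OF assms(1,3)] by blast
  then show ?thesis
    using assms(2,4) by (simp add: is_dfa_for_def)
qed

lemma snd_prod_path: "snd (prod_path \<delta> q0 L h s) = (s, dfa_run \<delta> q0 (map L (map fst h @ [s])))"
  by (simp add: prod_path_def Let_def)

lemma prod_path_Nil: "prod_path \<delta> q0 L [] s = ([], (s, \<delta> q0 (L s)))"
  by (simp add: prod_path_def Let_def dfa_run_def)

lemma fst_prod_path_snoc: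
  "fst (prod_path \<delta> q0 L (h @ [(s, a)]) s') =
     fst (prod_path \<delta> q0 L h s) @ [(snd (prod_path \<delta> q0 L h s), a)]"
proof -
  have "map (\<lambda>i. ((fst ((h @ [(s, a)]) ! i),
                    dfa_run \<delta> q0 (map L (take (Suc i) (map fst h @ [s, s'])))),
                   snd ((h @ [(s, a)]) ! i))) [0..<length h]
      = map (\<lambda>i. ((fst (h ! i), dfa_run \<delta> q0 (map L (take (Suc i) (map fst h @ [s])))),
                   snd (h ! i))) [0..<length h]"
    by (rule map_cong) (auto simp: nth_append take_append)
  then show ?thesis
    by (simp add: prod_path_def Let_def)
qed

lemma snd_prod_path_snoc:
  "snd (prod_path \<delta> q0 L (h @ [(s, a)]) s') = (s', \<delta> (snd (snd (prod_path \<delta> q0 L h s))) (L s'))"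
  by (simp add: snd_prod_path dfa_run_snoc[symmetric])

lemma set_fst_prod_path:
  "x \<in> set (fst (prod_path \<delta> q0 L h s)) \<longleftrightarrow>
   (\<exists>i<length h. x = ((fst (h ! i), dfa_run \<delta> q0 (map L (take (Suc i) (map fst h @ [s])))),
                       snd (h ! i)))"
  by (auto simp: prod_path_def Let_def)

lemma hd_fst_prod_path:
  "h \<noteq> [] \<Longrightarrow>
   hd (fst (prod_path \<delta> q0 L h s)) = ((fst (hd h), \<delta> q0 (L (fst (hd h)))), snd (hd h))"
  by (cases h) (auto simp del: upt_Suc simp: prod_path_def Let_def upt_conv_Cons dfa_run_def)

lemma map_project_prod_path: "map (\<lambda>((s, q), a). (s, a)) (fst (prod_path \<delta> q0 L h s)) = h"
proof (induction h arbitrary: s rule: rev_induct)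
  case Nil
  then show ?case by (simp add: prod_path_Nil)
next
  case (snoc x h)
  then show ?case
    by (cases x) (simp add: fst_prod_path_snoc snd_prod_path)
qed

lemma prod_path_in_goal_iff:
  assumes "is_domain Prop S s0 A F L" and "is_dfa_for Prop Q q0 \<delta> acc \<phi>"
    and "set (map fst h) \<subseteq> S" and "s \<in> S"
  shows "snd (prod_path \<delta> q0 L h s) \<in> prod_goal S Q acc \<longleftrightarrow>
         ltlf_models (map L (map fst h @ [s])) \<phi>"
  using assms dfa_run_labels_in_states[OF assms(1,2), of "map fst h @ [s]"]
    dfa_run_labels_accepted_iff[OF assms(1,2), of "map fst h @ [s]"]
  by (simp add: snd_prod_path prod_goal_def)

text \<open>Summing over the product states collapses the automaton component (it is determined
  by the successor state), and grouping the perturbed actions by their successors undoes the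
  sum in \<open>mdp_T\<close>.\<close>

lemma sum_prod_T_mdp_T:
  fixes g :: "'s \<times> 'q \<Rightarrow> real"
  assumes "finite S" and "finite Q" and "finite (A s)"
    and F_closed: "\<forall>a'\<in>A s. F s a' \<in> S" and \<delta>_closed: "\<forall>s'\<in>S. \<delta> q (L s') \<in> Q"
  shows "(\<Sum>x'\<in>S \<times> Q. prod_T (mdp_T A F err) \<delta> L (s, q) a x' * g x') =
         (\<Sum>a'\<in>A s. pmf (err s a) a' * g (F s a', \<delta> q (L (F s a'))))"
proof -
  have "(\<Sum>x'\<in>S \<times> Q. prod_T (mdp_T A F err) \<delta> L (s, q) a x' * g x') =
        (\<Sum>s'\<in>S. \<Sum>q'\<in>Q. prod_T (mdp_T A F err) \<delta> L (s, q) a (s', q') * g (s', q'))"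
    by (simp add: sum.cartesian_product split_def)
  also have "\<dots> = (\<Sum>s'\<in>S. mdp_T A F err s a s' * g (s', \<delta> q (L s')))"
  proof (rule sum.cong[OF refl])
    fix s' assume "s' \<in> S"
    have "(\<Sum>q'\<in>Q. prod_T (mdp_T A F err) \<delta> L (s, q) a (s', q') * g (s', q')) =
          (\<Sum>q'\<in>Q. if q' = \<delta> q (L s') then mdp_T A F err s a s' * g (s', q') else 0)"
      by (intro sum.cong) (auto simp: prod_T_def)
    then show "(\<Sum>q'\<in>Q. prod_T (mdp_T A F err) \<delta> L (s, q) a (s', q') * g (s', q')) =
               mdp_T A F err s a s' * g (s', \<delta> q (L s'))"
      using \<delta>_closed \<open>s' \<in> S\<close> \<open>finite Q\<close> by (simp add: sum.delta)
  qed
  also have "\<dots> = (\<Sum>s'\<in>S. \<Sum>a'\<in>{a'\<in>A s. F s a' = s'}.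
                      pmf (err s a) a' * g (F s a', \<delta> q (L (F s a'))))"
    unfolding mdp_T_def sum_distrib_right
    by (intro sum.cong refl) auto
  also have "\<dots> = (\<Sum>a'\<in>A s. pmf (err s a) a' * g (F s a', \<delta> q (L (F s a'))))"
    using F_closed by (intro sum.group \<open>finite (A s)\<close> \<open>finite S\<close>) auto
  finally show ?thesis .
qed

lemma th_within_induced_strategy:
  assumes dom: "is_domain Prop S s0 A F L" and aut: "is_dfa_for Prop Q q0 \<delta> acc \<phi>"
    and "set (map fst h) \<subseteq> S" and "s \<in> S"
  shows "th_within A F L err \<phi> (induced_strategy \<delta> q0 L \<tau>) n h s =
         reach_within (S \<times> Q) (prod_T (mdp_T A F err) \<delta> L) (prod_goal S Q acc) \<tau> n
           (fst (prod_path \<delta> q0 L h s)) (snd (prod_path \<delta> q0 L h s))"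
  using assms(3,4)
proof (induction n arbitrary: h s)
  case 0
  then show ?case
    using prod_path_in_goal_iff[OF dom aut 0] by simp
next
  case (Suc n)
  define H where "H = fst (prod_path \<delta> q0 L h s)"
  define q where "q = dfa_run \<delta> q0 (map L (map fst h @ [s]))"
  define a where "a = \<tau> H (s, q)"
  have snd_pp: "snd (prod_path \<delta> q0 L h s) = (s, q)"
    by (simp add: snd_prod_path q_def)
  have induced: "induced_strategy \<delta> q0 L \<tau> h s = a"
    by (simp add: induced_strategy_def a_def H_def snd_pp split_def)
  have "q \<in> Q"
    unfolding q_def using Suc.prems by (intro dfa_run_labels_in_states[OF dom aut]) auto
  then have \<delta>_closed: "\<forall>s'\<in>S. \<delta> q (L s') \<in> Q"
    using dom aut by (auto simp: is_domain_def is_dfa_for_def)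
  have fin: "finite S" "finite Q" "finite (A s)" and F_closed: "\<forall>a'\<in>A s. F s a' \<in> S"
    using dom aut Suc.prems(2) by (auto simp: is_domain_def is_dfa_for_def)
  have IH: "th_within A F L err \<phi> (induced_strategy \<delta> q0 L \<tau>) n (h @ [(s, a)]) (F s a') =
            reach_within (S \<times> Q) (prod_T (mdp_T A F err) \<delta> L) (prod_goal S Q acc) \<tau> n
              (H @ [((s, q), a)]) (F s a', \<delta> q (L (F s a')))" if "a' \<in> A s" for a'
    using Suc.IH[of "h @ [(s, a)]" "F s a'"] Suc.prems F_closed that
    by (simp add: fst_prod_path_snoc snd_prod_path_snoc snd_pp H_def)
  have goal: "(s, q) \<in> prod_goal S Q acc \<longleftrightarrow> ltlf_models (map L (map fst h @ [s])) \<phi>"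
    using prod_path_in_goal_iff[OF dom aut Suc.prems] snd_pp by simp
  show ?case
    unfolding H_def[symmetric] snd_pp
    using goal by (simp add: induced a_def[symmetric] sum_prod_T_mdp_T[where S=S and Q=Q and A=A and F=F and s=s and q=q and \<delta>=\<delta> and L=L, OF fin F_closed \<delta>_closed] IH)
qed

lemma th_prob_induced_strategy:
  assumes dom: "is_domain Prop S s0 A F L" and aut: "is_dfa_for Prop Q q0 \<delta> acc \<phi>"
  shows "th_prob s0 A F L err \<phi> (induced_strategy \<delta> q0 L \<tau>) =
         reach_prob (S \<times> Q) (prod_T (mdp_T A F err) \<delta> L) (s0, \<delta> q0 (L s0)) (prod_goal S Q acc) \<tau>"
  using th_within_induced_strategy[OF dom aut, of "[]" s0] dom
  by (simp add: th_prob_def reach_prob_def prod_path_Nil is_domain_def)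

lemma is_fpath_prod_path:
  assumes dom: "is_domain Prop S s0 A F L" and aut: "is_dfa_for Prop Q q0 \<delta> acc \<phi>"
    and fpath: "is_fpath S A s0 h s"
  shows "is_fpath (S \<times> Q) (\<lambda>x. A (fst x)) (s0, \<delta> q0 (L s0))
           (fst (prod_path \<delta> q0 L h s)) (snd (prod_path \<delta> q0 L h s))"
proof -
  have h: "\<forall>(y, a)\<in>set h. y \<in> S \<and> a \<in> A y" and "s \<in> S"
    and hd: "hd (map fst h @ [s]) = s0"
    using fpath by (auto simp: is_fpath_def)
  then have states: "set (map fst h @ [s]) \<subseteq> S"
    by auto
  have "dfa_run \<delta> q0 (map L (take (Suc i) (map fst h @ [s]))) \<in> Q" for i
    using states by (intro dfa_run_labels_in_states[OF dom aut]) (meson set_take_subset subset_trans)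
  then have "y \<in> S \<times> Q \<and> a \<in> A (fst y)" if "(y, a) \<in> set (fst (prod_path \<delta> q0 L h s))" for y a
    using that h nth_mem by (fastforce simp: set_fst_prod_path)
  moreover have "snd (prod_path \<delta> q0 L h s) \<in> S \<times> Q"
    using dfa_run_labels_in_states[OF dom aut states] \<open>s \<in> S\<close> by (simp add: snd_prod_path)
  moreover have "hd (map fst (fst (prod_path \<delta> q0 L h s)) @ [snd (prod_path \<delta> q0 L h s)]) =
                 (s0, \<delta> q0 (L s0))"
  proof (cases h)
    case Nil
    then show ?thesis using hd by (simp add: prod_path_Nil)
  next
    case (Cons x h')
    then have "fst (prod_path \<delta> q0 L h s) \<noteq> []"
      by (simp add: prod_path_def Let_def)
    then show ?thesis
      using hd Cons hd_fst_prod_path[of h \<delta> q0 L s] by (simp add: hd_map)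
  qed
  ultimately show ?thesis
    by (auto simp: is_fpath_def)
qed

lemma valid_induced_strategy:
  assumes "is_domain Prop S s0 A F L" and "is_dfa_for Prop Q q0 \<delta> acc \<phi>"
    and "valid_strategy (S \<times> Q) (\<lambda>x. A (fst x)) (s0, \<delta> q0 (L s0)) \<sigma>m"
  shows "valid_strategy S A s0 (induced_strategy \<delta> q0 L \<sigma>m)"
  using assms is_fpath_prod_path[OF assms(1,2)]
  by (fastforce simp: valid_strategy_def induced_strategy_def split_def snd_prod_path)

definition lift_strategy :: "(('s \<times> 'a) list \<Rightarrow> 's \<Rightarrow> 'a) \<Rightarrow> (('s \<times> 'q) \<times> 'a) list \<Rightarrow> 's \<times> 'q \<Rightarrow> 'a"
  where "lift_strategy \<sigma> H x = \<sigma> (map (\<lambda>((s, q), a). (s, a)) H) (fst x)"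

lemma induced_strategy_lift_strategy: "induced_strategy \<delta> q0 L (lift_strategy \<sigma>) = \<sigma>"
proof (intro ext)
  fix h s
  show "induced_strategy \<delta> q0 L (lift_strategy \<sigma>) h s = \<sigma> h s"
    unfolding induced_strategy_def case_prod_beta lift_strategy_def map_project_prod_path
    by (simp add: snd_prod_path)
qed

lemma is_fpath_project:
  assumes "is_fpath (S \<times> Q) (\<lambda>x. A (fst x)) (s0, q) H x"
  shows "is_fpath S A s0 (map (\<lambda>((s, q), a). (s, a)) H) (fst x)"
  using assms by (cases H) (auto simp: is_fpath_def split_def)

lemma valid_lift_strategy:
  assumes "valid_strategy S A s0 \<sigma>"
  shows "valid_strategy (S \<times> Q) (\<lambda>x. A (fst x)) (s0, q) (lift_strategy \<sigma>)"
  using assms is_fpath_project[of S Q A s0 q]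
  by (simp add: valid_strategy_def lift_strategy_def)

theorem theorem2:
  fixes Prop :: "'p set" and S :: "'s set" and s0 :: 's and A :: "'s \<Rightarrow> 'a set"
    and F :: "'s \<Rightarrow> 'a \<Rightarrow> 's" and L :: "'s \<Rightarrow> 'p set"
    and err :: "'s \<Rightarrow> 'a \<Rightarrow> 'a pmf" and \<phi> :: "'p ltlf"
    and Q :: "'q set" and q0 :: 'q and \<delta> :: "'q \<Rightarrow> 'p set \<Rightarrow> 'q" and acc :: "'q set"
    and \<sigma>m :: "(('s \<times> 'q) \<times> 'a) list \<Rightarrow> ('s \<times> 'q) \<Rightarrow> 'a"
  assumes dom: "is_domain Prop S s0 A F L"
    and errs: "is_errors S A err"
    and aut: "is_dfa_for Prop Q q0 \<delta> acc \<phi>"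
    and opt: "reach_optimal (S \<times> Q) (\<lambda>x. A (fst x)) (prod_T (mdp_T A F err) \<delta> L)
                (s0, \<delta> q0 (L s0)) (prod_goal S Q acc) \<sigma>m"
  shows "th_optimal S s0 A F L err \<phi> (induced_strategy \<delta> q0 L \<sigma>m)"
proof -
  note prob_eq = th_prob_induced_strategy[OF dom aut]
  have "valid_strategy S A s0 (induced_strategy \<delta> q0 L \<sigma>m)"
    using opt by (intro valid_induced_strategy[OF dom aut]) (simp add: reach_optimal_def)
  moreover have "th_prob s0 A F L err \<phi> \<sigma> \<le> th_prob s0 A F L err \<phi> (induced_strategy \<delta> q0 L \<sigma>m)"
    if "valid_strategy S A s0 \<sigma>" for \<sigma>
  proof -
    have "reach_prob (S \<times> Q) (prod_T (mdp_T A F err) \<delta> L) (s0, \<delta> q0 (L s0)) (prod_goal S Q acc)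
            (lift_strategy \<sigma>)
          \<le> reach_prob (S \<times> Q) (prod_T (mdp_T A F err) \<delta> L) (s0, \<delta> q0 (L s0)) (prod_goal S Q acc) \<sigma>m"
      using opt valid_lift_strategy[OF that, where Q=Q and q="\<delta> q0 (L s0)"] by (simp add: reach_optimal_def)
    then show ?thesis
      using prob_eq[where \<tau>="lift_strategy \<sigma>"] prob_eq[where \<tau>=\<sigma>m]
      by (simp add: induced_strategy_lift_strategy)
  qed
  ultimately show ?thesis
    by (simp add: th_optimal_def)
qed

end
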